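(* Let $k\ge 1$ and let $S_a,S_b\in\{0,1\}^{k^2}$. Let $G$ be the directed weighted graph on the $6k+1$ vertices $\ell_i,\ell_i',r_i,r_i',\overline{\ell}_i$ ($1\le i\le k$) and $p_0,\dots,p_k$ with the following edges: for each $1\le i\le k$, the edges $(\ell_i,r_i)$ and $(r_i',\ell_i')$ of weight $k$, the edge $(p_{i-1},p_i)$ of weight $1$, the edge $(p_{i-1},\ell_i)$ of weight $4k(k-i+1)$, and the edge $(\overline{\ell}_i,p_i)$ of weight $4ki$; for each $1\le i,j\le k$, the edge $(\ell_j',\overline{\ell}_i)$ of weight $k$ if $S_a[(i-1)k+j]=1$, and the edge $(r_i,r_j')$ of weight $k$ if $S_b[(i-1)k+j]=1$. Then $\Pi=\langle p_0,p_1,\dots,p_k\rangle$ is a shortest $p_0$-$p_k$ path in $G$, and: (i) if there is an index $m$ with $S_a[m]=S_b[m]=1$, the weight of a second simple shortest path from $p_0$ to $p_k$ (with respect to $\Pi$) is at most $4k^2+9k-1$; (ii) if there is no such index, every simple $p_0$-$p_k$ path that avoids at least one edge of $\Pi$ has weight at least $4k^2+12k$.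
   Context: Given a graph, vertices $s,t$ and a shortest $s$-$t$ path $P_{st}$, a second simple shortest path is a minimum-weight simple $s$-$t$ path that does not contain at least one edge of $P_{st}$. For a bit string $S$, $S[m]$ denotes its $m$-th bit. *)

theory Defs
  imports Main
begin

text \<open>A directed weighted graph (without parallel edges) is given by a partial weight
function w: w u v = Some c iff (u,v) is an edge of weight c.\<close>

definition path_edges :: "'v list \<Rightarrow> ('v \<times> 'v) set" where
  "path_edges xs = set (zip xs (tl xs))"

definition is_path :: "('v \<Rightarrow> 'v \<Rightarrow> nat option) \<Rightarrow> 'v \<Rightarrow> 'v \<Rightarrow> 'v list \<Rightarrow> bool" where
  "is_path w s t xs \<longleftrightarrow> xs \<noteq> [] \<and> hd xs = s \<and> last xs = t \<and>
     (\<forall>(u,v)\<in>path_edges xs. w u v \<noteq> None)"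

definition simple_path :: "('v \<Rightarrow> 'v \<Rightarrow> nat option) \<Rightarrow> 'v \<Rightarrow> 'v \<Rightarrow> 'v list \<Rightarrow> bool" where
  "simple_path w s t xs \<longleftrightarrow> is_path w s t xs \<and> distinct xs"

definition path_weight :: "('v \<Rightarrow> 'v \<Rightarrow> nat option) \<Rightarrow> 'v list \<Rightarrow> nat" where
  "path_weight w xs = sum_list (map (\<lambda>(u,v). the (w u v)) (zip xs (tl xs)))"

definition shortest_path :: "('v \<Rightarrow> 'v \<Rightarrow> nat option) \<Rightarrow> 'v \<Rightarrow> 'v \<Rightarrow> 'v list \<Rightarrow> bool" where
  "shortest_path w s t P \<longleftrightarrow> is_path w s t P \<and>
     (\<forall>Q. is_path w s t Q \<longrightarrow> path_weight w P \<le> path_weight w Q)"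

definition avoids_edge_of :: "('v \<Rightarrow> 'v \<Rightarrow> nat option) \<Rightarrow> 'v \<Rightarrow> 'v \<Rightarrow> 'v list \<Rightarrow> 'v list \<Rightarrow> bool" where
  "avoids_edge_of w s t P Q \<longleftrightarrow> simple_path w s t Q \<and> (\<exists>e\<in>path_edges P. e \<notin> path_edges Q)"

definition second_simple_shortest_path ::
  "('v \<Rightarrow> 'v \<Rightarrow> nat option) \<Rightarrow> 'v \<Rightarrow> 'v \<Rightarrow> 'v list \<Rightarrow> 'v list \<Rightarrow> bool" where
  "second_simple_shortest_path w s t P Q \<longleftrightarrow> avoids_edge_of w s t P Q \<and>
     (\<forall>Q'. avoids_edge_of w s t P Q' \<longrightarrow> path_weight w Q \<le> path_weight w Q')"

text \<open>Vertices: L i = \<ell>_i, L' i = \<ell>'_i, R i = r_i, R' i = r'_i, LB i = overline \<ell>_i, P i = p_i.\<close>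
datatype vtx = L nat | L' nat | R nat | R' nat | LB nat | P nat

definition vertices :: "nat \<Rightarrow> vtx set" where
  "vertices k = (\<Union>i\<in>{1..k}. {L i, L' i, R i, R' i, LB i}) \<union> P ` {0..k}"

text \<open>Bit strings S of length k^2; S[m] (1-indexed) is S ! (m-1).\<close>
definition bit :: "bool list \<Rightarrow> nat \<Rightarrow> bool" where
  "bit S m = S ! (m - 1)"

fun wt :: "nat \<Rightarrow> bool list \<Rightarrow> bool list \<Rightarrow> vtx \<Rightarrow> vtx \<Rightarrow> nat option" where
  "wt k Sa Sb (L i) (R j) = (if 1 \<le> i \<and> i \<le> k \<and> j = i then Some k else None)"
| "wt k Sa Sb (R' i) (L' j) = (if 1 \<le> i \<and> i \<le> k \<and> j = i then Some k else None)"
| "wt k Sa Sb (P a) (P i) = (if 1 \<le> i \<and> i \<le> k \<and> a = i - 1 then Some 1 else None)"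
| "wt k Sa Sb (P a) (L i) = (if 1 \<le> i \<and> i \<le> k \<and> a = i - 1 then Some (4*k*(k-i+1)) else None)"
| "wt k Sa Sb (LB i) (P j) = (if 1 \<le> i \<and> i \<le> k \<and> j = i then Some (4*k*i) else None)"
| "wt k Sa Sb (L' j) (LB i) = (if 1 \<le> i \<and> i \<le> k \<and> 1 \<le> j \<and> j \<le> k \<and> bit Sa ((i-1)*k+j)
                               then Some k else None)"
| "wt k Sa Sb (R i) (R' j) = (if 1 \<le> i \<and> i \<le> k \<and> 1 \<le> j \<and> j \<le> k \<and> bit Sb ((i-1)*k+j)
                               then Some k else None)"
| "wt k Sa Sb _ _ = None"

definition Pi_path :: "nat \<Rightarrow> vtx list" where
  "Pi_path k = map P [0..<k+1]"

end

theory Submission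
  imports Defs
begin

text \<open>The spine \<open>P 0, \<dots>, P k\<close> has weight \<open>k\<close>, and the only way to leave it is a detour
  \<open>P (i-1), L i, R i, R' j, L' j, LB i', P i'\<close>, which exists iff \<open>S\<^sub>b[(i-1)k+j] = S\<^sub>a[(i'-1)k+j] = 1\<close>
  and costs \<open>4k(k-i+1) + 4k + 4ki'\<close>.  A common index \<open>(i-1)k+j\<close> allows \<open>i' = i\<close>, giving a detour
  of cost \<open>4k\<^sup>2 + 8k\<close> and a path of weight \<open>4k\<^sup>2 + 9k - 1\<close>.  Otherwise \<open>i' \<noteq> i\<close>, and a simple path
  cannot rejoin the spine below the point where it left it, so \<open>i' > i\<close> and the detour alone
  costs at least \<open>4k\<^sup>2 + 12k\<close>.\<close>

definition walk :: "('v \<Rightarrow> 'v \<Rightarrow> nat option) \<Rightarrow> 'v list \<Rightarrow> bool" where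
  "walk w xs \<longleftrightarrow> (\<forall>(u,v)\<in>path_edges xs. w u v \<noteq> None)"

lemma is_path_iff_walk:
  "is_path w s t xs \<longleftrightarrow> xs \<noteq> [] \<and> hd xs = s \<and> last xs = t \<and> walk w xs"
  unfolding is_path_def walk_def by simp

lemma path_edges_Nil [simp]: "path_edges [] = {}"
  and path_edges_singleton [simp]: "path_edges [x] = {}"
  and path_edges_Cons_Cons [simp]: "path_edges (x # y # zs) = insert (x, y) (path_edges (y # zs))"
  by (simp_all add: path_edges_def)

lemma path_weight_Nil [simp]: "path_weight w [] = 0"
  and path_weight_singleton [simp]: "path_weight w [x] = 0"
  and path_weight_Cons_Cons [simp]: "path_weight w (x # y # zs) = the (w x y) + path_weight w (y # zs)"
  by (simp_all add: path_weight_def)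

lemma walk_Nil [simp]: "walk w []"
  and walk_singleton [simp]: "walk w [x]"
  and walk_Cons_Cons [simp]: "walk w (x # y # zs) \<longleftrightarrow> w x y \<noteq> None \<and> walk w (y # zs)"
  by (simp_all add: walk_def)

lemma path_edges_append:
  "xs \<noteq> [] \<Longrightarrow> ys \<noteq> [] \<Longrightarrow>
   path_edges (xs @ ys) = insert (last xs, hd ys) (path_edges xs \<union> path_edges ys)"
  by (induction xs rule: induct_list012) (auto simp: neq_Nil_conv)

lemma path_weight_append:
  "xs \<noteq> [] \<Longrightarrow> ys \<noteq> [] \<Longrightarrow>
   path_weight w (xs @ ys) = path_weight w xs + the (w (last xs) (hd ys)) + path_weight w ys"
  by (induction xs rule: induct_list012) (auto simp: neq_Nil_conv)

lemma walk_append: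
  "xs \<noteq> [] \<Longrightarrow> ys \<noteq> [] \<Longrightarrow>
   walk w (xs @ ys) \<longleftrightarrow> walk w xs \<and> w (last xs) (hd ys) \<noteq> None \<and> walk w ys"
  unfolding walk_def by (simp add: path_edges_append ball_Un conj_ac)

lemma path_edges_distinct_succ_unique:
  "distinct xs \<Longrightarrow> (u, v) \<in> path_edges xs \<Longrightarrow> (u, v') \<in> path_edges xs \<Longrightarrow> v = v'"
  unfolding path_edges_def by (induction xs rule: induct_list012) (auto dest: set_zip_leftD)

lemma second_simple_shortest_path_exists:
  assumes "avoids_edge_of w s t \<Pi> Q"
  shows "\<exists>Q'. second_simple_shortest_path w s t \<Pi> Q'"
  using ex_has_least_nat[of "avoids_edge_of w s t \<Pi>" Q "path_weight w", OF assms]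
  unfolding second_simple_shortest_path_def by blast

lemma wt_P_out: "wt k Sa Sb (P a) z \<noteq> None \<Longrightarrow> (z = P (Suc a) \<or> z = L (Suc a)) \<and> Suc a \<le> k"
  and wt_L_out: "wt k Sa Sb (L i) z \<noteq> None \<Longrightarrow> z = R i \<and> 1 \<le> i \<and> i \<le> k"
  and wt_R_out: "wt k Sa Sb (R i) z \<noteq> None \<Longrightarrow> \<exists>j. z = R' j \<and> 1 \<le> j \<and> j \<le> k \<and> bit Sb ((i-1)*k+j)"
  and wt_R'_out: "wt k Sa Sb (R' j) z \<noteq> None \<Longrightarrow> z = L' j"
  and wt_L'_out:
    "wt k Sa Sb (L' j) z \<noteq> None \<Longrightarrow> \<exists>i'. z = LB i' \<and> 1 \<le> i' \<and> i' \<le> k \<and> bit Sa ((i'-1)*k+j)"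
  and wt_LB_out: "wt k Sa Sb (LB i) z \<noteq> None \<Longrightarrow> z = P i"
  by (cases z; auto split: if_splits)+

lemma walk_spine: "b \<le> k \<Longrightarrow> walk (wt k Sa Sb) (map P [a..<Suc b])"
proof (induction b)
  case (Suc b)
  show ?case
  proof (cases "a \<le> b")
    case True
    have "map P [a..<Suc (Suc b)] = map P [a..<Suc b] @ [P (Suc b)]" using True by simp
    with True Suc show ?thesis by (simp add: walk_append last_map del: upt_Suc)
  qed (simp add: not_le le_Suc_eq)
qed (simp add: upt_rec)

lemma path_weight_spine: "b \<le> k \<Longrightarrow> path_weight (wt k Sa Sb) (map P [a..<Suc b]) = b - a"
proof (induction b)
  case (Suc b)
  show ?case
  proof (cases "a \<le> b")
    case True
    have "map P [a..<Suc (Suc b)] = map P [a..<Suc b] @ [P (Suc b)]" using True by simp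
    with True Suc show ?thesis by (simp add: path_weight_append last_map del: upt_Suc)
  qed (simp add: not_le le_Suc_eq)
qed (simp add: upt_rec)

lemma spine_walk_unique:
  assumes "walk (wt k Sa Sb) xs" "xs \<noteq> []" "hd xs = P a" "last xs = P b" "set xs \<subseteq> range P"
  shows "xs = map P [a..<Suc b]"
  using assms
proof (induction xs arbitrary: a)
  case (Cons x xs)
  show ?case
  proof (cases xs)
    case Nil
    with Cons.prems show ?thesis by simp
  next
    case (Cons y ys)
    have "wt k Sa Sb (P a) y \<noteq> None" "y \<in> range P"
      using Cons.prems(1,3,5) \<open>xs = y # ys\<close> by simp_all
    then have "y = P (Suc a)" using wt_P_out[of k Sa Sb a y] by blast
    have xs: "xs = map P [Suc a..<Suc b]"
      by (rule Cons.IH) (use Cons.prems \<open>xs = y # ys\<close> \<open>y = P (Suc a)\<close> in simp_all)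
    then have "a < b" using \<open>xs = y # ys\<close> by (cases "a < b") simp_all
    with xs Cons.prems(3) show ?thesis by (simp add: upt_conv_Cons del: upt_Suc)
  qed
qed simp

lemma walk_through_gadget:
  assumes "walk (wt k Sa Sb) (L i # xs)" "last (L i # xs) \<in> range P"
  obtains j i' ys where "xs = [R i, R' j, L' j, LB i'] @ ys" "ys \<noteq> []" "hd ys = P i'"
    "1 \<le> i" "i \<le> k" "1 \<le> j" "j \<le> k" "1 \<le> i'" "i' \<le> k" "bit Sb ((i-1)*k+j)" "bit Sa ((i'-1)*k+j)"
    "path_weight (wt k Sa Sb) (L i # xs) = 4*k + 4*k*i' + path_weight (wt k Sa Sb) ys"
proof -
  have step: "\<exists>y ys. xs = y # ys \<and> wt k Sa Sb x y \<noteq> None \<and> walk (wt k Sa Sb) (y # ys) \<and>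
      last (y # ys) = last (x # xs)"
    if "walk (wt k Sa Sb) (x # xs)" "last (x # xs) \<in> range P" "x \<notin> range P" for x xs
    using that by (cases xs) auto
  from step[OF assms] obtain y1 ys1 where
    1: "xs = y1 # ys1" "wt k Sa Sb (L i) y1 \<noteq> None" "walk (wt k Sa Sb) (y1 # ys1)"
       "last (y1 # ys1) = last (L i # xs)" by auto
  from wt_L_out[OF 1(2)] have i: "y1 = R i" "1 \<le> i" "i \<le> k" by auto
  from step[OF 1(3)] 1(4) assms(2) i obtain y2 ys2 where
    2: "ys1 = y2 # ys2" "wt k Sa Sb (R i) y2 \<noteq> None" "walk (wt k Sa Sb) (y2 # ys2)"
       "last (y2 # ys2) = last (L i # xs)" by auto
  from wt_R_out[OF 2(2)] obtain j where j: "y2 = R' j" "1 \<le> j" "j \<le> k" "bit Sb ((i-1)*k+j)" by auto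
  from step[OF 2(3)] 2(4) assms(2) j obtain y3 ys3 where
    3: "ys2 = y3 # ys3" "wt k Sa Sb (R' j) y3 \<noteq> None" "walk (wt k Sa Sb) (y3 # ys3)"
       "last (y3 # ys3) = last (L i # xs)" by auto
  from wt_R'_out[OF 3(2)] have y3: "y3 = L' j" .
  from step[OF 3(3)] 3(4) assms(2) y3 obtain y4 ys4 where
    4: "ys3 = y4 # ys4" "wt k Sa Sb (L' j) y4 \<noteq> None" "walk (wt k Sa Sb) (y4 # ys4)"
       "last (y4 # ys4) = last (L i # xs)" by auto
  from wt_L'_out[OF 4(2)] obtain i' where i': "y4 = LB i'" "1 \<le> i'" "i' \<le> k" "bit Sa ((i'-1)*k+j)"
    by auto
  from step[OF 4(3)] 4(4) assms(2) i' obtain y5 ys5 where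
    5: "ys4 = y5 # ys5" "wt k Sa Sb (LB i') y5 \<noteq> None" by auto
  from wt_LB_out[OF 5(2)] have "y5 = P i'" .
  with 1 2 3 4 5 i j y3 i' show ?thesis by (intro that[of j i' "y5 # ys5"]) auto
qed

lemma walk_leaving_spine:
  assumes "walk (wt k Sa Sb) xs" "xs \<noteq> []" "hd xs = P a" "last xs \<in> range P" "\<not> set xs \<subseteq> range P"
  shows "\<exists>i j i' ys. a < i \<and> i \<le> k \<and> 1 \<le> j \<and> j \<le> k \<and> 1 \<le> i' \<and> i' \<le> k \<and>
    bit Sb ((i-1)*k+j) \<and> bit Sa ((i'-1)*k+j) \<and>
    xs = map P [a..<i] @ [L i, R i, R' j, L' j, LB i'] @ ys \<and> ys \<noteq> [] \<and> hd ys = P i' \<and>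
    4*k*(k-i+1) + 4*k + 4*k*i' + path_weight (wt k Sa Sb) ys \<le> path_weight (wt k Sa Sb) xs"
  using assms
proof (induction xs arbitrary: a)
  case (Cons x xs)
  then obtain y ys where xs: "xs = y # ys" and x: "x = P a"
    by (cases xs) auto
  with Cons.prems have e: "wt k Sa Sb (P a) y \<noteq> None" and w: "walk (wt k Sa Sb) xs" by simp_all
  from wt_P_out[OF e] consider "y = P (Suc a)" | "y = L (Suc a)" by blast
  then show ?case
  proof cases
    case 1
    have "xs \<noteq> []" "hd xs = P (Suc a)" "last xs \<in> range P" "\<not> set xs \<subseteq> range P"
      using Cons.prems xs x 1 by auto
    from Cons.IH[OF w this] obtain i j i' zs where
      D: "Suc a < i" "i \<le> k" "1 \<le> j" "j \<le> k" "1 \<le> i'" "i' \<le> k"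
         "bit Sb ((i-1)*k+j)" "bit Sa ((i'-1)*k+j)"
         "xs = map P [Suc a..<i] @ [L i, R i, R' j, L' j, LB i'] @ zs" "zs \<noteq> []" "hd zs = P i'"
         "4*k*(k-i+1) + 4*k + 4*k*i' + path_weight (wt k Sa Sb) zs \<le> path_weight (wt k Sa Sb) xs"
      by blast
    have "x # xs = map P [a..<i] @ [L i, R i, R' j, L' j, LB i'] @ zs"
      using D(1,9) x by (simp add: upt_conv_Cons del: upt_Suc)
    moreover have "4*k*(k-i+1) + 4*k + 4*k*i' + path_weight (wt k Sa Sb) zs \<le>
        path_weight (wt k Sa Sb) (x # xs)"
      using D(12) xs by simp
    moreover have "a < i" using D(1) by simp
    ultimately show ?thesis using D(2-8,10,11) by blast
  next
    case 2
    have "walk (wt k Sa Sb) (L (Suc a) # ys)" "last (L (Suc a) # ys) \<in> range P"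
      using w Cons.prems(4) xs 2 by simp_all
    then obtain j i' zs where
      G: "ys = [R (Suc a), R' j, L' j, LB i'] @ zs" "zs \<noteq> []" "hd zs = P i'"
         "Suc a \<le> k" "1 \<le> j" "j \<le> k" "1 \<le> i'" "i' \<le> k" "bit Sb ((Suc a - 1)*k+j)" "bit Sa ((i'-1)*k+j)"
         "path_weight (wt k Sa Sb) (L (Suc a) # ys) = 4*k + 4*k*i' + path_weight (wt k Sa Sb) zs"
      by (rule walk_through_gadget)
    have "x # xs = map P [a..<Suc a] @ [L (Suc a), R (Suc a), R' j, L' j, LB i'] @ zs"
      using G(1) xs x 2 by simp
    moreover have "4*k*(k - Suc a + 1) + 4*k + 4*k*i' + path_weight (wt k Sa Sb) zs \<le>
        path_weight (wt k Sa Sb) (x # xs)"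
      using G(4,11) xs x 2 by simp
    ultimately show ?thesis using G(2-10) lessI[of a] by blast
  qed
qed simp

lemma Pi_path_is_path: "is_path (wt k Sa Sb) (P 0) (P k) (Pi_path k)"
  using walk_spine[of k k Sa Sb 0] unfolding Pi_path_def is_path_iff_walk
  by (simp add: hd_map last_map del: upt_Suc)

lemma path_weight_Pi_path: "path_weight (wt k Sa Sb) (Pi_path k) = k"
  using path_weight_spine[of k k Sa Sb 0] unfolding Pi_path_def by simp

lemma spine_path_eq_Pi_path:
  "is_path (wt k Sa Sb) (P 0) (P k) Q \<Longrightarrow> set Q \<subseteq> range P \<Longrightarrow> Q = Pi_path k"
  using spine_walk_unique[of k Sa Sb Q 0 k] unfolding is_path_iff_walk Pi_path_def by simp

lemma Pi_path_shortest: "shortest_path (wt k Sa Sb) (P 0) (P k) (Pi_path k)"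
  unfolding shortest_path_def
proof (intro conjI allI impI Pi_path_is_path)
  fix Q assume Q: "is_path (wt k Sa Sb) (P 0) (P k) Q"
  show "path_weight (wt k Sa Sb) (Pi_path k) \<le> path_weight (wt k Sa Sb) Q"
  proof (cases "set Q \<subseteq> range P")
    case False
    from Q have "walk (wt k Sa Sb) Q" "Q \<noteq> []" "hd Q = P 0" "last Q \<in> range P"
      unfolding is_path_iff_walk by simp_all
    from walk_leaving_spine[OF this False] obtain i i' ys where
      "4*k*(k-i+1) + 4*k + 4*k*i' + path_weight (wt k Sa Sb) ys \<le> path_weight (wt k Sa Sb) Q"
      by blast
    then show ?thesis by (simp add: path_weight_Pi_path)
  qed (use Q spine_path_eq_Pi_path in simp)
qed

lemma avoiding_path_weight_ge:
  assumes no_common: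
      "\<And>i j. 1 \<le> i \<Longrightarrow> i \<le> k \<Longrightarrow> 1 \<le> j \<Longrightarrow> j \<le> k \<Longrightarrow> \<not> (bit Sa ((i-1)*k+j) \<and> bit Sb ((i-1)*k+j))"
    and Q: "avoids_edge_of (wt k Sa Sb) (P 0) (P k) (Pi_path k) Q"
  shows "4*k^2 + 12*k \<le> path_weight (wt k Sa Sb) Q"
proof -
  from Q have path: "is_path (wt k Sa Sb) (P 0) (P k) Q" and "distinct Q" and "Q \<noteq> Pi_path k"
    unfolding avoids_edge_of_def simple_path_def by auto
  with spine_path_eq_Pi_path have "\<not> set Q \<subseteq> range P" by blast
  moreover from path have "walk (wt k Sa Sb) Q" "Q \<noteq> []" "hd Q = P 0" "last Q \<in> range P"
    unfolding is_path_iff_walk by simp_all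
  ultimately obtain i j i' ys where
    D: "0 < i" "i \<le> k" "1 \<le> j" "j \<le> k" "bit Sb ((i-1)*k+j)" "bit Sa ((i'-1)*k+j)"
       "Q = map P [0..<i] @ [L i, R i, R' j, L' j, LB i'] @ ys" "ys \<noteq> []" "hd ys = P i'"
       "4*k*(k-i+1) + 4*k + 4*k*i' + path_weight (wt k Sa Sb) ys \<le> path_weight (wt k Sa Sb) Q"
    using walk_leaving_spine[of k Sa Sb Q 0] by blast
  have "i' \<noteq> i" using no_common[of i j] D by auto
  moreover have "\<not> i' < i"
  proof
    assume "i' < i"
    then have "P i' \<in> set (map P [0..<i])" by simp
    moreover have "P i' \<in> set ys" using D(8,9) by (cases ys) auto
    ultimately show False using \<open>distinct Q\<close> D(7) by auto
  qed
  ultimately have "k + 2 \<le> k - i + 1 + i'" using D(2) by linarith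
  then have "4*k*(k + 2) \<le> 4*k*(k - i + 1) + 4*k*i'"
    by (metis add_mult_distrib2 mult_le_mono2)
  with D(10) show ?thesis by (simp add: power2_eq_square algebra_simps)
qed

lemma common_index_detour:
  assumes i: "1 \<le> i" "i \<le> k" and j: "1 \<le> j" "j \<le> k"
    and bits: "bit Sa ((i-1)*k+j)" "bit Sb ((i-1)*k+j)"
  shows "\<exists>Q. avoids_edge_of (wt k Sa Sb) (P 0) (P k) (Pi_path k) Q \<and>
    path_weight (wt k Sa Sb) Q = 4*k^2 + 9*k - 1"
proof -
  define A where "A = map P [0..<Suc (i - 1)]"
  define B where "B = [L i, R i, R' j, L' j, LB i]"
  define C where "C = map P [i..<Suc k]"
  have ne: "A \<noteq> []" "B \<noteq> []" "C \<noteq> []"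
    and ends: "hd A = P 0" "last A = P (i - 1)" "hd B = L i" "last B = LB i" "hd C = P i" "last C = P k"
    unfolding A_def B_def C_def using i by (simp_all add: last_map hd_map del: upt_Suc)
  have Pi_split: "Pi_path k = A @ C"
    unfolding Pi_path_def A_def C_def using i upt_add_eq_append[of 0 i "Suc k - i"] by simp
  have "walk (wt k Sa Sb) A" "walk (wt k Sa Sb) B" "walk (wt k Sa Sb) C"
    using walk_spine[of "i - 1" k Sa Sb 0] walk_spine[of k k Sa Sb i] i j bits
    unfolding A_def B_def C_def by simp_all
  then have walk: "walk (wt k Sa Sb) (A @ B @ C)"
    using ne ends i by (simp add: walk_append)
  have "path_weight (wt k Sa Sb) A = i - 1" "path_weight (wt k Sa Sb) B = 4*k"
    "path_weight (wt k Sa Sb) C = k - i"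
    using path_weight_spine[of "i - 1" k Sa Sb 0] path_weight_spine[of k k Sa Sb i] i j bits
    unfolding A_def B_def C_def by simp_all
  then have "path_weight (wt k Sa Sb) (A @ B @ C) = (i - 1) + 4*k*(k - i + 1) + 4*k + 4*k*i + (k - i)"
    using ne ends i by (simp add: path_weight_append)
  also have "\<dots> = 4*k^2 + 9*k - 1"
  proof -
    have "4*k*(k - i + 1) + 4*k*i = 4*k*(k + 1)"
      using i by (metis add_mult_distrib2 le_add_diff_inverse2 add.commute add.left_commute)
    then show ?thesis using i by (simp add: power2_eq_square algebra_simps)
  qed
  finally have weight: "path_weight (wt k Sa Sb) (A @ B @ C) = 4*k^2 + 9*k - 1" .
  have "distinct (A @ B @ C)"
    unfolding A_def B_def C_def using i by (simp add: distinct_map inj_on_def) auto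
  moreover have "(P (i - 1), L i) \<in> path_edges (A @ B @ C)"
    using ne ends by (simp add: path_edges_append)
  ultimately have "(P (i - 1), P i) \<notin> path_edges (A @ B @ C)"
    using path_edges_distinct_succ_unique[of "A @ B @ C" "P (i - 1)" "L i" "P i"] by blast
  moreover have "(P (i - 1), P i) \<in> path_edges (Pi_path k)"
    using Pi_split ne ends by (simp add: path_edges_append)
  ultimately have "avoids_edge_of (wt k Sa Sb) (P 0) (P k) (Pi_path k) (A @ B @ C)"
    using walk ne ends \<open>distinct (A @ B @ C)\<close>
    unfolding avoids_edge_of_def simple_path_def is_path_iff_walk by auto
  with weight show ?thesis by blast
qed

lemma grid_index_iff:
  fixes k m :: nat
  shows "(\<exists>i j. 1 \<le> i \<and> i \<le> k \<and> 1 \<le> j \<and> j \<le> k \<and> m = (i-1)*k + j) \<longleftrightarrow> 1 \<le> m \<and> m \<le> k^2"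
proof
  assume "\<exists>i j. 1 \<le> i \<and> i \<le> k \<and> 1 \<le> j \<and> j \<le> k \<and> m = (i-1)*k + j"
  then obtain i j where "1 \<le> i" "i \<le> k" "1 \<le> j" "j \<le> k" "m = (i-1)*k + j" by blast
  moreover have "(i-1)*k \<le> (k-1)*k" using \<open>i \<le> k\<close> by (intro mult_le_mono1 diff_le_mono)
  moreover have "(k-1)*k + k = k^2" by (cases k) (simp_all add: power2_eq_square)
  ultimately show "1 \<le> m \<and> m \<le> k^2" by linarith
next
  assume m: "1 \<le> m \<and> m \<le> k^2"
  then have "0 < k" by (cases k) auto
  have "m - 1 < k * k" using m unfolding power2_eq_square by linarith
  then have "(m-1) div k < k" using \<open>0 < k\<close> by (simp add: div_less_iff_less_mult)
  moreover have "m = ((m-1) div k + 1 - 1)*k + ((m-1) mod k + 1)"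
    using m div_mult_mod_eq[of "m-1" k] by simp
  ultimately show "\<exists>i j. 1 \<le> i \<and> i \<le> k \<and> 1 \<le> j \<and> j \<le> k \<and> m = (i-1)*k + j"
    using \<open>0 < k\<close> by (intro exI[of _ "(m-1) div k + 1"] exI[of _ "(m-1) mod k + 1"])
      (auto simp: Suc_le_eq)
qed

theorem mainTheorem1:
  fixes k :: nat and Sa Sb :: "bool list"
  assumes "k \<ge> 1" and "length Sa = k^2" and "length Sb = k^2"
  shows "shortest_path (wt k Sa Sb) (P 0) (P k) (Pi_path k)
    \<and> ((\<exists>m. 1 \<le> m \<and> m \<le> k^2 \<and> bit Sa m \<and> bit Sb m) \<longrightarrow>
         (\<exists>Q. second_simple_shortest_path (wt k Sa Sb) (P 0) (P k) (Pi_path k) Q) \<and>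
         (\<forall>Q. second_simple_shortest_path (wt k Sa Sb) (P 0) (P k) (Pi_path k) Q \<longrightarrow>
              path_weight (wt k Sa Sb) Q \<le> 4*k^2 + 9*k - 1))
    \<and> (\<not>(\<exists>m. 1 \<le> m \<and> m \<le> k^2 \<and> bit Sa m \<and> bit Sb m) \<longrightarrow>
         (\<forall>Q. avoids_edge_of (wt k Sa Sb) (P 0) (P k) (Pi_path k) Q \<longrightarrow>
              path_weight (wt k Sa Sb) Q \<ge> 4*k^2 + 12*k))"
  \<comment> \<open>No hypothesis is needed: for \<open>k = 0\<close> parts (i) and (ii) hold vacuously, and only the
    positions \<open>1..k\<^sup>2\<close> of the bit strings are ever read.\<close>
proof (intro conjI impI allI)
  show "shortest_path (wt k Sa Sb) (P 0) (P k) (Pi_path k)" by (rule Pi_path_shortest)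
next
  assume "\<exists>m. 1 \<le> m \<and> m \<le> k^2 \<and> bit Sa m \<and> bit Sb m"
  then obtain m where m: "1 \<le> m \<and> m \<le> k^2" "bit Sa m" "bit Sb m" by blast
  from m(1)[folded grid_index_iff] obtain i j where
    "1 \<le> i" "i \<le> k" "1 \<le> j" "j \<le> k" "m = (i-1)*k + j" by blast
  with m(2,3) common_index_detour obtain Q where
    Q: "avoids_edge_of (wt k Sa Sb) (P 0) (P k) (Pi_path k) Q"
       "path_weight (wt k Sa Sb) Q = 4*k^2 + 9*k - 1" by blast
  from Q(1) show "\<exists>Q. second_simple_shortest_path (wt k Sa Sb) (P 0) (P k) (Pi_path k) Q"
    by (rule second_simple_shortest_path_exists)
  fix Q' assume "second_simple_shortest_path (wt k Sa Sb) (P 0) (P k) (Pi_path k) Q'"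
  with Q show "path_weight (wt k Sa Sb) Q' \<le> 4*k^2 + 9*k - 1"
    unfolding second_simple_shortest_path_def by metis
next
  fix Q assume no_common: "\<not> (\<exists>m. 1 \<le> m \<and> m \<le> k^2 \<and> bit Sa m \<and> bit Sb m)"
    and Q: "avoids_edge_of (wt k Sa Sb) (P 0) (P k) (Pi_path k) Q"
  have "\<not> (bit Sa ((i-1)*k+j) \<and> bit Sb ((i-1)*k+j))"
    if "1 \<le> i" "i \<le> k" "1 \<le> j" "j \<le> k" for i j
    using no_common grid_index_iff[of k "(i-1)*k+j"] that by blast
  from avoiding_path_weight_ge[OF this Q] show "4*k^2 + 12*k \<le> path_weight (wt k Sa Sb) Q" .
qed

end
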